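(* Let $\mu$ be a growth rate and let $V$ be a Lyapunov function for $x'=A(t)x$ such that $|V(\tau,x)|\le C\mu(\tau)^{\mathrm{sign}(\tau)\epsilon}\|x\|$ for all $(\tau,x)$, for some $C>0,\epsilon\ge0$. Let $\mathcal{G}^s_\tau\subset\mathcal{E}^s_\tau$ and $\mathcal{G}^u_\tau\subset\mathcal{E}^u_\tau$ ($\tau\in\mathbb{R}$) be subspaces with $\Psi(t,\tau)\mathcal{G}^s_\tau=\mathcal{G}^s_t$ and $\Psi(t,\tau)\mathcal{G}^u_\tau=\mathcal{G}^u_t$ for all $t,\tau$. Suppose there are $\alpha<0$, $\beta<0$ such that for each $\tau$: (1) for $x\in\mathcal{G}^u_\tau$ and $t\ge\tau$, $V(t,\Psi(t,\tau)x)\ge(\mu(\tau)/\mu(t))^\alpha V(\tau,x)$; (2) for $x\in\mathcal{G}^s_\tau$ and $t\ge\tau$, $|V(t,\Psi(t,\tau)x)|\le(\mu(t)/\mu(\tau))^\beta|V(\tau,x)|$; (3) for $x\in\mathcal{G}^s_\tau\cup\mathcal{G}^u_\tau$, $|V(\tau,x)|\ge\mu(\tau)^{-\mathrm{sign}(\tau)\epsilon}\|x\|/C$. Then for all $t\ge\tau$, $$\|\Psi(t,\tau)|_{\mathcal{G}^s_\tau}\|\le C^2\Big(\frac{\mu(t)}{\mu(\tau)}\Big)^{\beta+\mathrm{sign}(t)\epsilon}\mu(\tau)^{2\mathrm{sign}(\tau)\epsilon},\qquad \|\Psi(t,\tau)^{-1}|_{\mathcal{G}^u_t}\|\le C^2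\Big(\frac{\mu(\tau)}{\mu(t)}\Big)^{-\alpha+\mathrm{sign}(\tau)\epsilon}\mu(t)^{2\mathrm{sign}(t)\epsilon}.$$
   Context: Growth rate: strictly increasing $\mu:\mathbb{R}\to(0,\infty)$, $\mu(0)=1$, $\mu\to\infty$ at $+\infty$, $\mu\to0$ at $-\infty$. $A(t)\in GL(n,\mathbb{R})$ locally integrable, evolution operator $\Psi(t,s)$. Cones $\mathcal{C}^u(W)=\{0\}\cup W^{-1}(0,\infty)$, $\mathcal{C}^s(W)=\{0\}\cup W^{-1}(-\infty,0)$. A continuous $V:\mathbb{R}\times\mathbb{R}^n\to\mathbb{R}$, $V_t=V(t,\cdot)$, is a Lyapunov function if there are $d_s+d_u=n$ with $d_u,d_s$ the maximal dimensions of linear subspaces inside $\mathcal{C}^u(V_\tau),\mathcal{C}^s(V_\tau)$ for each $\tau$, and $V(t,\Psi(t,\tau)x)\ge V(\tau,x)$ for all $t\ge\tau$, $x$. $\mathcal{E}^u_\tau=\bigcap_{t}\Psi(\tau,t)\overline{\mathcal{C}^u(V_t)}$, $\mathcal{E}^s_\tau=\bigcap_t\Psi(\tau,t)\overline{\mathcal{C}^s(V_t)}$. *)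

theory Defs
  imports "HOL-Analysis.Analysis"
begin

definition growth_rate :: "(real \<Rightarrow> real) \<Rightarrow> bool" where
  "growth_rate \<mu> \<longleftrightarrow> strict_mono \<mu> \<and> (\<forall>t. \<mu> t > 0) \<and> \<mu> 0 = 1 \<and>
     filterlim \<mu> at_top at_top \<and> (\<mu> \<longlongrightarrow> 0) at_bot"

definition admissible_coeff :: "(real \<Rightarrow> real^'n^'n) \<Rightarrow> bool" where
  "admissible_coeff A \<longleftrightarrow> (\<forall>t. invertible (A t)) \<and>
     (\<forall>a b. A absolutely_integrable_on {a..b})"

text \<open>Fundamental matrix solution (Caratheodory sense, integral form) of x' = A(t) x:
  a matrix solution whose values are invertible.\<close>
definition fundamental_matrix :: "(real \<Rightarrow> real^'n^'n) \<Rightarrow> (real \<Rightarrow> real^'n^'n) \<Rightarrow> bool" where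
  "fundamental_matrix A \<Phi> \<longleftrightarrow> continuous_on UNIV \<Phi> \<and> (\<forall>t. invertible (\<Phi> t)) \<and>
     (\<forall>s t. s \<le> t \<longrightarrow> ((\<lambda>r. A r ** \<Phi> r) has_integral (\<Phi> t - \<Phi> s)) {s..t})"

definition evolution_operator ::
  "(real \<Rightarrow> real^'n^'n) \<Rightarrow> (real \<Rightarrow> real \<Rightarrow> real^'n^'n) \<Rightarrow> bool" where
  "evolution_operator A \<Psi> \<longleftrightarrow>
     (\<exists>\<Phi>. fundamental_matrix A \<Phi> \<and> (\<forall>t s. \<Psi> t s = \<Phi> t ** matrix_inv (\<Phi> s)))"

definition cone_u :: "(real^'n \<Rightarrow> real) \<Rightarrow> (real^'n) set" where
  "cone_u W = {0} \<union> {x. W x > 0}"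

definition cone_s :: "(real^'n \<Rightarrow> real) \<Rightarrow> (real^'n) set" where
  "cone_s W = {0} \<union> {x. W x < 0}"

definition max_subspace_dim :: "(real^'n) set \<Rightarrow> nat \<Rightarrow> bool" where
  "max_subspace_dim S d \<longleftrightarrow>
     (\<exists>L. subspace L \<and> L \<subseteq> S \<and> dim L = d) \<and>
     (\<forall>L. subspace L \<and> L \<subseteq> S \<longrightarrow> dim L \<le> d)"

definition lyapunov_function ::
  "(real \<Rightarrow> real \<Rightarrow> real^'n^'n) \<Rightarrow> (real \<Rightarrow> real^'n \<Rightarrow> real) \<Rightarrow> bool" where
  "lyapunov_function \<Psi> V \<longleftrightarrow>
     continuous_on UNIV (\<lambda>p. V (fst p) (snd p)) \<and>
     (\<exists>ds du. ds + du = CARD('n) \<and>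
        (\<forall>\<tau>. max_subspace_dim (cone_u (V \<tau>)) du \<and> max_subspace_dim (cone_s (V \<tau>)) ds)) \<and>
     (\<forall>t \<tau> x. \<tau> \<le> t \<longrightarrow> V t (\<Psi> t \<tau> *v x) \<ge> V \<tau> x)"

definition E_u :: "(real \<Rightarrow> real \<Rightarrow> real^'n^'n) \<Rightarrow> (real \<Rightarrow> real^'n \<Rightarrow> real) \<Rightarrow> real \<Rightarrow> (real^'n) set" where
  "E_u \<Psi> V \<tau> = (\<Inter>t. (\<lambda>x. \<Psi> \<tau> t *v x) ` closure (cone_u (V t)))"

definition E_s :: "(real \<Rightarrow> real \<Rightarrow> real^'n^'n) \<Rightarrow> (real \<Rightarrow> real^'n \<Rightarrow> real) \<Rightarrow> real \<Rightarrow> (real^'n) set" where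
  "E_s \<Psi> V \<tau> = (\<Inter>t. (\<lambda>x. \<Psi> \<tau> t *v x) ` closure (cone_s (V t)))"

definition restr_norm :: "real^'n^'n \<Rightarrow> (real^'n) set \<Rightarrow> real" where
  "restr_norm M G = Sup {norm (M *v x) | x. x \<in> G \<and> norm x \<le> 1}"

end

theory Submission
  imports Defs
begin

text \<open>On \<open>Gs(s) \<union> Gu(s)\<close> the hypotheses make \<open>\<bar>V(s,x)\<bar>\<close> comparable to \<open>norm x\<close>,
  with constants \<open>C\<close> and \<open>\<mu>(s) powr (\<plusminus> sgn s * \<epsilon>)\<close>. Comparing \<open>\<Psi>(t,\<tau>)x\<close> with \<open>x\<close>
  through \<open>V\<close>, the decay (2) of \<open>\<bar>V\<bar>\<close> along \<open>Gs\<close> gives the first estimate. On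
  \<open>Gu(\<tau>) \<subseteq> E\<^sup>u(\<tau>) \<subseteq> closure (cone_u (V \<tau>))\<close> the function \<open>V(\<tau>,\<cdot>)\<close> is nonnegative,
  so the growth (1) can be inverted, giving the second estimate. In both cases the leftover
  weight \<open>\<mu>(s) powr ((sgn s - sgn r) * \<epsilon>)\<close> for \<open>s \<le> r\<close> (resp. its mirror image) is at
  least \<open>1\<close>, because \<open>\<mu> < 1\<close> at negative and \<open>\<mu> > 1\<close> at positive times.\<close>

lemma matrix_inv_right:
  fixes M :: "'a::semiring_1^'n^'n"
  assumes "invertible M"
  shows "M ** matrix_inv M = mat 1"
  using someI_ex[OF assms[unfolded invertible_def]] unfolding matrix_inv_def by blast

lemma matrix_inv_left:
  fixes M :: "'a::semiring_1^'n^'n"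
  assumes "invertible M"
  shows "matrix_inv M ** M = mat 1"
  using someI_ex[OF assms[unfolded invertible_def]] unfolding matrix_inv_def by blast

lemma invertible_matrix_inv:
  fixes M :: "'a::semiring_1^'n^'n"
  assumes "invertible M"
  shows "invertible (matrix_inv M)"
  using matrix_inv_left[OF assms] matrix_inv_right[OF assms] unfolding invertible_def by blast

lemma matrix_inv_mult_vector_cancel:
  fixes M :: "'a::semiring_1^'n^'n"
  assumes "invertible M"
  shows "matrix_inv M *v (M *v x) = x"
  by (simp add: matrix_vector_mul_assoc matrix_inv_left[OF assms])

lemma evolution_operator_invertible:
  assumes "evolution_operator A \<Psi>"
  shows "invertible (\<Psi> t s)"
proof -
  obtain \<Phi> where "fundamental_matrix A \<Phi>" and \<Psi>: "\<And>t s. \<Psi> t s = \<Phi> t ** matrix_inv (\<Phi> s)"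
    using assms unfolding evolution_operator_def by blast
  then have "\<And>t. invertible (\<Phi> t)"
    unfolding fundamental_matrix_def by blast
  then show ?thesis
    unfolding \<Psi> by (intro invertible_mult invertible_matrix_inv)
qed

lemma evolution_operator_same_time:
  assumes "evolution_operator A \<Psi>"
  shows "\<Psi> s s = mat 1"
proof -
  obtain \<Phi> where "fundamental_matrix A \<Phi>" and \<Psi>: "\<And>t s. \<Psi> t s = \<Phi> t ** matrix_inv (\<Phi> s)"
    using assms unfolding evolution_operator_def by blast
  then have "invertible (\<Phi> s)"
    unfolding fundamental_matrix_def by blast
  then show ?thesis
    unfolding \<Psi> by (rule matrix_inv_right)
qed

lemma lyapunov_function_continuous_on:
  assumes "lyapunov_function \<Psi> V"
  shows "continuous_on UNIV (V \<tau>)"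
proof -
  have "continuous_on UNIV (\<lambda>p. V (fst p) (snd p))"
    using assms unfolding lyapunov_function_def by blast
  then have "continuous_on UNIV ((\<lambda>p. V (fst p) (snd p)) \<circ> Pair \<tau>)"
    by (intro continuous_on_compose continuous_intros) (auto intro: continuous_on_subset)
  then show ?thesis
    by (simp add: o_def)
qed

lemma closure_cone_u_nonneg:
  assumes "continuous_on UNIV W" and "0 \<le> W 0" and "x \<in> closure (cone_u W)"
  shows "0 \<le> W x"
proof -
  have "closed {x. 0 \<le> W x}"
    using assms(1) by (intro closed_Collect_le continuous_on_const)
  moreover have "cone_u W \<subseteq> {x. 0 \<le> W x}"
    using assms(2) unfolding cone_u_def by auto
  ultimately show ?thesis
    using assms(3) closure_minimal by blast
qed

lemma E_u_subset_closure_cone_u: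
  assumes "\<Psi> \<tau> \<tau> = mat 1"
  shows "E_u \<Psi> V \<tau> \<subseteq> closure (cone_u (V \<tau>))"
proof
  fix x assume "x \<in> E_u \<Psi> V \<tau>"
  then have "x \<in> (\<lambda>z. \<Psi> \<tau> \<tau> *v z) ` closure (cone_u (V \<tau>))"
    unfolding E_u_def by blast
  then show "x \<in> closure (cone_u (V \<tau>))"
    using assms by simp
qed

lemma E_u_nonneg:
  assumes "evolution_operator A \<Psi>" and "lyapunov_function \<Psi> V"
    and "0 \<le> V \<tau> 0" and "x \<in> E_u \<Psi> V \<tau>"
  shows "0 \<le> V \<tau> x"
proof (rule closure_cone_u_nonneg)
  show "continuous_on UNIV (V \<tau>)"
    using assms(2) by (rule lyapunov_function_continuous_on)
  show "x \<in> closure (cone_u (V \<tau>))"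
    using assms(4) E_u_subset_closure_cone_u[of \<Psi>, OF evolution_operator_same_time[OF assms(1)]] by blast
qed (rule assms(3))

lemma restr_norm_le:
  fixes M :: "real^'n^'n"
  assumes "subspace G" and "0 \<le> K" and "\<And>x. x \<in> G \<Longrightarrow> norm (M *v x) \<le> K * norm x"
  shows "restr_norm M G \<le> K"
  unfolding restr_norm_def
proof (rule cSup_least)
  show "{norm (M *v x) |x. x \<in> G \<and> norm x \<le> 1} \<noteq> {}"
    using subspace_0[OF assms(1)] by force
next
  fix y assume "y \<in> {norm (M *v x) |x. x \<in> G \<and> norm x \<le> 1}"
  then obtain x where x: "x \<in> G" "norm x \<le> 1" and y: "y = norm (M *v x)"
    by blast
  have "y \<le> K * norm x"
    using assms(3)[OF x(1)] y by simp
  also have "\<dots> \<le> K"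
    using x(2) assms(2) by (simp add: mult_left_le)
  finally show "y \<le> K" .
qed

lemma one_le_powr_nonpos:
  fixes x e :: real
  assumes "0 < x" and "x \<le> 1" and "e \<le> 0"
  shows "1 \<le> x powr e"
  using powr_mono'[OF assms(3), of x] assms(1,2) by simp

lemma growth_rate_pos: "growth_rate \<mu> \<Longrightarrow> 0 < \<mu> t"
  unfolding growth_rate_def by blast

lemma growth_rate_less_one: "growth_rate \<mu> \<Longrightarrow> t < 0 \<Longrightarrow> \<mu> t < 1"
  unfolding growth_rate_def by (metis strict_monoD)

lemma growth_rate_gt_one: "growth_rate \<mu> \<Longrightarrow> 0 < t \<Longrightarrow> 1 < \<mu> t"
  unfolding growth_rate_def by (metis strict_monoD)

lemma growth_rate_powr_sgn_diff_ge_one: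
  assumes \<mu>: "growth_rate \<mu>" and "0 \<le> \<epsilon>" and "s \<le> r"
  shows "1 \<le> \<mu> s powr ((sgn s - sgn r) * \<epsilon>)"
    and "1 \<le> \<mu> r powr ((sgn r - sgn s) * \<epsilon>)"
proof -
  have \<mu>0: "\<mu> 0 = 1"
    using \<mu> unfolding growth_rate_def by blast
  show "1 \<le> \<mu> s powr ((sgn s - sgn r) * \<epsilon>)"
  proof (cases "s < 0")
    case True
    have "(sgn s - sgn r) * \<epsilon> \<le> 0"
      using True \<open>0 \<le> \<epsilon>\<close> by (auto simp: sgn_real_def mult_nonpos_nonneg)
    moreover have "\<mu> s \<le> 1"
      using growth_rate_less_one[OF \<mu> True] by simp
    ultimately show ?thesis
      using growth_rate_pos[OF \<mu>] by (intro one_le_powr_nonpos)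
  next
    case False
    then show ?thesis
      using \<open>s \<le> r\<close> \<mu>0 growth_rate_pos[OF \<mu>, of s] by (cases "s = 0") auto
  qed
  show "1 \<le> \<mu> r powr ((sgn r - sgn s) * \<epsilon>)"
  proof (cases "0 < r")
    case True
    have "0 \<le> (sgn r - sgn s) * \<epsilon>"
      using True \<open>0 \<le> \<epsilon>\<close> by (auto simp: sgn_real_def)
    moreover have "1 \<le> \<mu> r"
      using growth_rate_gt_one[OF \<mu> True] by simp
    ultimately show ?thesis
      by (intro ge_one_powr_ge_zero)
  next
    case False
    then show ?thesis
      using \<open>s \<le> r\<close> \<mu>0 growth_rate_pos[OF \<mu>, of r] by (cases "r = 0") auto
  qed
qed

lemma powr_weight_le:
  fixes a b \<gamma> p q :: real
  assumes "0 < a" and "0 < b" and "1 \<le> b powr (p - q)"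
  shows "(a / b) powr \<gamma> * a powr q * b powr p \<le> (a / b) powr (\<gamma> + q) * b powr (2 * p)"
proof -
  have "(a / b) powr \<gamma> * a powr q * b powr p
      \<le> (a / b) powr \<gamma> * a powr q * b powr p * b powr (p - q)"
    using assms(3) by (metis mult.right_neutral mult_left_mono powr_ge_zero zero_le_mult_iff)
  also have "\<dots> = (a / b) powr (\<gamma> + q) * b powr (2 * p)"
    using assms(1,2) by (simp add: powr_add powr_diff powr_divide field_simps flip: powr_add)
  finally show ?thesis .
qed

text \<open>The assumption \<open>V_Gu_nonneg\<close> stands in for \<open>Gu \<tau> \<subseteq> E_u \<Psi> V \<tau>\<close>, from which it
  follows by \<open>E_u_nonneg\<close>.\<close>

locale lyapunov_growth_estimates =
  fixes \<mu> :: "real \<Rightarrow> real"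
    and \<Psi> :: "real \<Rightarrow> real \<Rightarrow> real^'n^'n"
    and V :: "real \<Rightarrow> real^'n \<Rightarrow> real"
    and Gs Gu :: "real \<Rightarrow> (real^'n) set"
    and C \<epsilon> \<alpha> \<beta> :: real
  assumes growth: "growth_rate \<mu>"
    and C_pos: "0 < C" and eps_nonneg: "0 \<le> \<epsilon>"
    and \<Psi>_invertible: "\<And>t \<tau>. invertible (\<Psi> t \<tau>)"
    and V_bound: "\<And>\<tau> x. \<bar>V \<tau> x\<bar> \<le> C * \<mu> \<tau> powr (sgn \<tau> * \<epsilon>) * norm x"
    and Gs_sub: "\<And>\<tau>. subspace (Gs \<tau>)" and Gu_sub: "\<And>\<tau>. subspace (Gu \<tau>)"
    and Gs_inv: "\<And>t \<tau>. (\<lambda>x. \<Psi> t \<tau> *v x) ` Gs \<tau> = Gs t"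
    and Gu_inv: "\<And>t \<tau>. (\<lambda>x. \<Psi> t \<tau> *v x) ` Gu \<tau> = Gu t"
    and V_Gu_nonneg: "\<And>\<tau> x. x \<in> Gu \<tau> \<Longrightarrow> 0 \<le> V \<tau> x"
    and cond1: "\<And>\<tau> t x. x \<in> Gu \<tau> \<Longrightarrow> \<tau> \<le> t \<Longrightarrow>
                  V t (\<Psi> t \<tau> *v x) \<ge> (\<mu> \<tau> / \<mu> t) powr \<alpha> * V \<tau> x"
    and cond2: "\<And>\<tau> t x. x \<in> Gs \<tau> \<Longrightarrow> \<tau> \<le> t \<Longrightarrow>
                  \<bar>V t (\<Psi> t \<tau> *v x)\<bar> \<le> (\<mu> t / \<mu> \<tau>) powr \<beta> * \<bar>V \<tau> x\<bar>"
    and cond3: "\<And>\<tau> x. x \<in> Gs \<tau> \<union> Gu \<tau> \<Longrightarrow>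
                  \<bar>V \<tau> x\<bar> \<ge> \<mu> \<tau> powr (- sgn \<tau> * \<epsilon>) * norm x / C"
begin

lemma norm_le_V:
  assumes "y \<in> Gs s \<union> Gu s"
  shows "norm y \<le> C * \<mu> s powr (sgn s * \<epsilon>) * \<bar>V s y\<bar>"
proof -
  have "\<mu> s powr (- sgn s * \<epsilon>) * norm y / C \<le> \<bar>V s y\<bar>"
    using cond3[OF assms] .
  moreover have "0 < \<mu> s powr (sgn s * \<epsilon>)"
    using growth_rate_pos[OF growth, of s] by simp
  ultimately show ?thesis
    using C_pos by (simp add: powr_minus field_simps)
qed

lemma stable_bound:
  assumes "\<tau> \<le> t"
  shows "restr_norm (\<Psi> t \<tau>) (Gs \<tau>)
           \<le> C\<^sup>2 * (\<mu> t / \<mu> \<tau>) powr (\<beta> + sgn t * \<epsilon>) * \<mu> \<tau> powr (2 * sgn \<tau> * \<epsilon>)"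
proof (rule restr_norm_le[OF Gs_sub])
  fix x assume x: "x \<in> Gs \<tau>"
  then have "\<Psi> t \<tau> *v x \<in> Gs t"
    using Gs_inv by blast
  then have "norm (\<Psi> t \<tau> *v x) \<le> C * \<mu> t powr (sgn t * \<epsilon>) * \<bar>V t (\<Psi> t \<tau> *v x)\<bar>"
    by (intro norm_le_V) blast
  also have "\<dots> \<le> C * \<mu> t powr (sgn t * \<epsilon>) * ((\<mu> t / \<mu> \<tau>) powr \<beta> * \<bar>V \<tau> x\<bar>)"
    using cond2[OF x assms] C_pos by (intro mult_left_mono) auto
  also have "\<dots> \<le> C * \<mu> t powr (sgn t * \<epsilon>)
                    * ((\<mu> t / \<mu> \<tau>) powr \<beta> * (C * \<mu> \<tau> powr (sgn \<tau> * \<epsilon>) * norm x))"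
    using V_bound C_pos by (intro mult_left_mono) auto
  also have "\<dots> = C\<^sup>2 * ((\<mu> t / \<mu> \<tau>) powr \<beta> * \<mu> t powr (sgn t * \<epsilon>) * \<mu> \<tau> powr (sgn \<tau> * \<epsilon>))
                    * norm x"
    by (simp add: power2_eq_square algebra_simps)
  also have "\<dots> \<le> C\<^sup>2 * ((\<mu> t / \<mu> \<tau>) powr (\<beta> + sgn t * \<epsilon>) * \<mu> \<tau> powr (2 * (sgn \<tau> * \<epsilon>)))
                    * norm x"
    using growth_rate_powr_sgn_diff_ge_one(1)[OF growth eps_nonneg assms]
    by (intro mult_right_mono mult_left_mono powr_weight_le growth_rate_pos[OF growth])
       (auto simp: left_diff_distrib)
  finally show "norm (\<Psi> t \<tau> *v x)
      \<le> C\<^sup>2 * (\<mu> t / \<mu> \<tau>) powr (\<beta> + sgn t * \<epsilon>) * \<mu> \<tau> powr (2 * sgn \<tau> * \<epsilon>) * norm x"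
    by (simp add: mult_ac)
qed simp

lemma unstable_bound:
  assumes "\<tau> \<le> t"
  shows "restr_norm (matrix_inv (\<Psi> t \<tau>)) (Gu t)
           \<le> C\<^sup>2 * (\<mu> \<tau> / \<mu> t) powr (- \<alpha> + sgn \<tau> * \<epsilon>) * \<mu> t powr (2 * sgn t * \<epsilon>)"
proof (rule restr_norm_le[OF Gu_sub])
  fix y assume "y \<in> Gu t"
  then obtain x where x: "x \<in> Gu \<tau>" and y: "y = \<Psi> t \<tau> *v x"
    using Gu_inv by blast
  have x_eq: "matrix_inv (\<Psi> t \<tau>) *v y = x"
    unfolding y by (rule matrix_inv_mult_vector_cancel[OF \<Psi>_invertible])
  have weight_pos: "0 < (\<mu> \<tau> / \<mu> t) powr \<alpha>"
    using growth_rate_pos[OF growth, of t] growth_rate_pos[OF growth, of \<tau>] by simp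
  have V_y: "(\<mu> \<tau> / \<mu> t) powr \<alpha> * V \<tau> x \<le> V t y"
    using cond1[OF x assms] y by simp
  have V_x: "\<bar>V \<tau> x\<bar> \<le> (\<mu> \<tau> / \<mu> t) powr (- \<alpha>) * \<bar>V t y\<bar>"
  proof -
    have "0 \<le> V \<tau> x"
      using V_Gu_nonneg[OF x] .
    moreover from this have "0 \<le> V t y"
      using V_y weight_pos by (meson mult_nonneg_nonneg less_imp_le order.trans)
    moreover have "V \<tau> x \<le> V t y / (\<mu> \<tau> / \<mu> t) powr \<alpha>"
      using V_y weight_pos by (simp add: pos_le_divide_eq mult.commute)
    ultimately show ?thesis
      by (simp add: powr_minus divide_inverse mult.commute)
  qed
  have "norm x \<le> C * \<mu> \<tau> powr (sgn \<tau> * \<epsilon>) * \<bar>V \<tau> x\<bar>"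
    using x by (intro norm_le_V) blast
  also have "\<dots> \<le> C * \<mu> \<tau> powr (sgn \<tau> * \<epsilon>) * ((\<mu> \<tau> / \<mu> t) powr (- \<alpha>) * \<bar>V t y\<bar>)"
    using V_x C_pos by (intro mult_left_mono) auto
  also have "\<dots> \<le> C * \<mu> \<tau> powr (sgn \<tau> * \<epsilon>)
                    * ((\<mu> \<tau> / \<mu> t) powr (- \<alpha>) * (C * \<mu> t powr (sgn t * \<epsilon>) * norm y))"
    using V_bound C_pos by (intro mult_left_mono) auto
  also have "\<dots> = C\<^sup>2 * ((\<mu> \<tau> / \<mu> t) powr (- \<alpha>) * \<mu> \<tau> powr (sgn \<tau> * \<epsilon>) * \<mu> t powr (sgn t * \<epsilon>))
                    * norm y"
    by (simp add: power2_eq_square algebra_simps)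
  also have "\<dots> \<le> C\<^sup>2 * ((\<mu> \<tau> / \<mu> t) powr (- \<alpha> + sgn \<tau> * \<epsilon>) * \<mu> t powr (2 * (sgn t * \<epsilon>)))
                    * norm y"
    using growth_rate_powr_sgn_diff_ge_one(2)[OF growth eps_nonneg assms]
    by (intro mult_right_mono mult_left_mono powr_weight_le growth_rate_pos[OF growth])
       (auto simp: left_diff_distrib)
  finally show "norm (matrix_inv (\<Psi> t \<tau>) *v y)
      \<le> C\<^sup>2 * (\<mu> \<tau> / \<mu> t) powr (- \<alpha> + sgn \<tau> * \<epsilon>) * \<mu> t powr (2 * sgn t * \<epsilon>) * norm y"
    by (simp add: x_eq mult_ac)
qed simp

end

theorem mainTheorem9:
  fixes \<mu> :: "real \<Rightarrow> real"
    and A :: "real \<Rightarrow> real^'n^'n"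
    and \<Psi> :: "real \<Rightarrow> real \<Rightarrow> real^'n^'n"
    and V :: "real \<Rightarrow> real^'n \<Rightarrow> real"
    and Gs Gu :: "real \<Rightarrow> (real^'n) set"
    and C \<epsilon> \<alpha> \<beta> :: real
  assumes growth: "growth_rate \<mu>"
    and coeff: "admissible_coeff A"
    and evol: "evolution_operator A \<Psi>"
    and lyap: "lyapunov_function \<Psi> V"
    and C_pos: "C > 0" and eps_nonneg: "\<epsilon> \<ge> 0"
    and V_bound: "\<And>\<tau> x. \<bar>V \<tau> x\<bar> \<le> C * \<mu> \<tau> powr (sgn \<tau> * \<epsilon>) * norm x"
    and Gs_sub: "\<And>\<tau>. subspace (Gs \<tau>)" and Gu_sub: "\<And>\<tau>. subspace (Gu \<tau>)"
    and Gs_E: "\<And>\<tau>. Gs \<tau> \<subseteq> E_s \<Psi> V \<tau>" and Gu_E: "\<And>\<tau>. Gu \<tau> \<subseteq> E_u \<Psi> V \<tau>"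
    and Gs_inv: "\<And>t \<tau>. (\<lambda>x. \<Psi> t \<tau> *v x) ` Gs \<tau> = Gs t"
    and Gu_inv: "\<And>t \<tau>. (\<lambda>x. \<Psi> t \<tau> *v x) ` Gu \<tau> = Gu t"
    and \<alpha>_neg: "\<alpha> < 0" and \<beta>_neg: "\<beta> < 0"
    and cond1: "\<And>\<tau> t x. x \<in> Gu \<tau> \<Longrightarrow> \<tau> \<le> t \<Longrightarrow>
                  V t (\<Psi> t \<tau> *v x) \<ge> (\<mu> \<tau> / \<mu> t) powr \<alpha> * V \<tau> x"
    and cond2: "\<And>\<tau> t x. x \<in> Gs \<tau> \<Longrightarrow> \<tau> \<le> t \<Longrightarrow>
                  \<bar>V t (\<Psi> t \<tau> *v x)\<bar> \<le> (\<mu> t / \<mu> \<tau>) powr \<beta> * \<bar>V \<tau> x\<bar>"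
    and cond3: "\<And>\<tau> x. x \<in> Gs \<tau> \<union> Gu \<tau> \<Longrightarrow>
                  \<bar>V \<tau> x\<bar> \<ge> \<mu> \<tau> powr (- sgn \<tau> * \<epsilon>) * norm x / C"
  shows "\<forall>t \<tau>. \<tau> \<le> t \<longrightarrow>
           restr_norm (\<Psi> t \<tau>) (Gs \<tau>)
             \<le> C\<^sup>2 * (\<mu> t / \<mu> \<tau>) powr (\<beta> + sgn t * \<epsilon>) * \<mu> \<tau> powr (2 * sgn \<tau> * \<epsilon>)
         \<and> restr_norm (matrix_inv (\<Psi> t \<tau>)) (Gu t)
             \<le> C\<^sup>2 * (\<mu> \<tau> / \<mu> t) powr (- \<alpha> + sgn \<tau> * \<epsilon>) * \<mu> t powr (2 * sgn t * \<epsilon>)"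
proof -
  have "\<And>\<tau> x. x \<in> Gu \<tau> \<Longrightarrow> 0 \<le> V \<tau> x"
  proof (rule E_u_nonneg[OF evol lyap])
    show "\<And>\<tau>. 0 \<le> V \<tau> 0"
      using V_bound[of _ 0] by simp
  qed (use Gu_E in blast)
  then interpret lyapunov_growth_estimates \<mu> \<Psi> V Gs Gu C \<epsilon> \<alpha> \<beta>
    using assms evolution_operator_invertible[OF evol] by unfold_locales auto
  show ?thesis
    using stable_bound unstable_bound by blast
qed

end
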